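(* Let $n,k,r,\ell$ be positive integers. Then \[S_{\geq \ell}(n,k,r)=(k+r-1)S_{\geq \ell}(n-1,k,r)+\binom{n-1}{\ell-1}\Big((k-1)S_{\geq \ell}(n-\ell,k-1,r)+S_{\geq \ell}(n-\ell,k,r-1)\Big),\] where terms with $n-\ell<0$ (for which $\binom{n-1}{\ell-1}=0$) are $0$ and the term $(k-1)S_{\geq \ell}(n-\ell,k-1,r)$ is $0$ when $k=1$.
   Context: For integers $N\ge 0$, $k\ge1$, $r\ge 0$, $\ell\ge1$, $S_{\geq \ell}(N,k,r)$ is the number of ways to partition $[N]=\{1,\dots,N\}$ into $r+k-1$ non-empty blocks, each of size at least $\ell$, where $r$ of the blocks receive the label $1$ (blocks with label $1$ are indistinguishable among themselves) and the remaining $k-1$ blocks receive the distinct labels $2,3,\dots,k$. *)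

theory Defs
  imports "HOL-Library.Disjoint_Sets" "HOL-Library.FuncSet"
begin

text \<open>S_{>= l}(N,k,r): pairs (P, L) where P is a set partition of {1..N} into
  non-empty blocks each of size at least l, and L labels the blocks with labels
  in {1..k} so that each label j in {2..k} is used by exactly one block and label 1
  is used by exactly r blocks (blocks with label 1 are thus unordered).
  Hence P has r+k-1 blocks.\<close>

definition S_ge :: "nat \<Rightarrow> nat \<Rightarrow> nat \<Rightarrow> nat \<Rightarrow> nat" where
  "S_ge l N k r = card {(P, L). partition_on {1..N} P
       \<and> (\<forall>B\<in>P. l \<le> card B)
       \<and> L \<in> P \<rightarrow>\<^sub>E {1..k}
       \<and> (\<forall>j\<in>{2..k}. card {B\<in>P. L B = j} = 1)
       \<and> card {B\<in>P. L B = 1} = r}"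

end

theory Submission
  imports Defs
begin

text \<open>
  Classify the labelled partitions of \<open>[n]\<close> by the block \<open>B\<close> containing \<open>n\<close>.
  If \<open>|B| > \<ell>\<close>, deleting \<open>n\<close> leaves a labelled partition of \<open>[n - 1]\<close>, and \<open>n\<close> can be
  put back into any of its \<open>k + r - 1\<close> blocks.
  If \<open>|B| = \<ell>\<close>, then \<open>B\<close> is fixed by its other \<open>\<ell> - 1\<close> elements, and deleting it leaves a
  labelled partition of \<open>n - \<ell>\<close> points that has lost either one of the \<open>k - 1\<close> distinct
  labels or one block with label \<open>1\<close>.
  The sets and labels left over are not intervals, so everything is counted for an arbitrary
  finite ground set and an arbitrary set of distinct labels; transport along bijections shows
  that the count depends only on their cardinalities.
\<close>

section \<open>Labelled partitions\<close>

definition labelled_partitions ::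
    "nat \<Rightarrow> 'a set \<Rightarrow> 'b \<Rightarrow> 'b set \<Rightarrow> nat \<Rightarrow> ('a set set \<times> ('a set \<Rightarrow> 'b)) set" where
  "labelled_partitions l A e D r = {(P, L). partition_on A P \<and> (\<forall>B\<in>P. l \<le> card B)
     \<and> L \<in> P \<rightarrow>\<^sub>E insert e D \<and> (\<forall>j\<in>D. card {B\<in>P. L B = j} = 1)
     \<and> card {B\<in>P. L B = e} = r}"

lemma labelled_partitionsD:
  assumes "(P, L) \<in> labelled_partitions l A e D r"
  shows "partition_on A P" "\<And>B. B \<in> P \<Longrightarrow> l \<le> card B" "L \<in> P \<rightarrow>\<^sub>E insert e D"
    "\<And>j. j \<in> D \<Longrightarrow> card {B\<in>P. L B = j} = 1" "card {B\<in>P. L B = e} = r"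
  using assms by (auto simp: labelled_partitions_def)

lemma labelled_partitionsI:
  assumes "partition_on A P" "\<And>B. B \<in> P \<Longrightarrow> l \<le> card B" "L \<in> P \<rightarrow>\<^sub>E insert e D"
    "\<And>j. j \<in> D \<Longrightarrow> card {B\<in>P. L B = j} = 1" "card {B\<in>P. L B = e} = r"
  shows "(P, L) \<in> labelled_partitions l A e D r"
  using assms by (auto simp: labelled_partitions_def)

lemma finite_labelled_partitions:
  assumes "finite A" "finite D"
  shows "finite (labelled_partitions l A e D r)"
proof (rule finite_subset)
  show "labelled_partitions l A e D r \<subseteq> Sigma {P. partition_on A P} (\<lambda>P. P \<rightarrow>\<^sub>E insert e D)"
    by (auto simp: labelled_partitions_def)
  show "finite (Sigma {P. partition_on A P} (\<lambda>P. P \<rightarrow>\<^sub>E insert e D))"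
    using assms by (intro finite_SigmaI finitely_many_partition_on finite_PiE)
      (auto intro: finite_elements)
qed

lemma card_blocks_labelled_partition:
  assumes "(P, L) \<in> labelled_partitions l A e D r" "finite A" "finite D" "e \<notin> D"
  shows "card P = card D + r"
proof -
  note PL = labelled_partitionsD[OF assms(1)]
  have "card P = (\<Sum>j\<in>insert e D. \<Sum>B\<in>{B\<in>P. L B = j}. 1)"
    unfolding card_eq_sum
    by (rule sum.group[symmetric]) (use finite_elements[OF assms(2) PL(1)] assms(3) PL(3) in auto)
  also have "\<dots> = card {B\<in>P. L B = e} + (\<Sum>j\<in>D. card {B\<in>P. L B = j})"
    using assms(3,4) by simp
  also have "\<dots> = card D + r"
    using PL(4,5) by simp
  finally show ?thesis .
qed

section \<open>Transport of labelled partitions\<close>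

text \<open>The block \<open>\<phi> B\<close> inherits the label \<open>g (L B)\<close>; this needs \<open>\<phi>\<close> to be injective on \<open>P\<close>.\<close>

definition map_labelled_partition ::
    "('a set \<Rightarrow> 'c set) \<Rightarrow> ('b \<Rightarrow> 'd) \<Rightarrow> 'a set set \<times> ('a set \<Rightarrow> 'b)
      \<Rightarrow> 'c set set \<times> ('c set \<Rightarrow> 'd)" where
  "map_labelled_partition \<phi> g =
     (\<lambda>(P, L). (\<phi> ` P, \<lambda>B'\<in>\<phi> ` P. g (L (the_inv_into P \<phi> B'))))"

lemma fst_map_labelled_partition [simp]:
  "fst (map_labelled_partition \<phi> g (P, L)) = \<phi> ` P"
  by (simp add: map_labelled_partition_def)

lemma map_labelled_partition_label:
  "inj_on \<phi> P \<Longrightarrow> B \<in> P \<Longrightarrow> snd (map_labelled_partition \<phi> g (P, L)) (\<phi> B) = g (L B)"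
  by (simp add: map_labelled_partition_def the_inv_into_f_f)

lemma map_labelled_partition_mem:
  assumes PL: "(P, L) \<in> labelled_partitions l A e D r"
    and \<phi>: "inj_on \<phi> P" "partition_on A' (\<phi> ` P)" "\<And>B. B \<in> P \<Longrightarrow> l \<le> card (\<phi> B)"
    and g: "inj_on g (insert e D)"
  shows "map_labelled_partition \<phi> g (P, L) \<in> labelled_partitions l A' (g e) (g ` D) r"
proof -
  note PL = labelled_partitionsD[OF PL]
  define L' where "L' = snd (map_labelled_partition \<phi> g (P, L))"
  have L': "L' (\<phi> B) = g (L B)" if "B \<in> P" for B
    using map_labelled_partition_label[OF \<phi>(1) that] unfolding L'_def .
  have fibre: "{B'\<in>\<phi> ` P. L' B' = g j} = \<phi> ` {B\<in>P. L B = j}" if "j \<in> insert e D" for j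
    using L' inj_onD[OF g] PL(3) that by fastforce
  have card_fibre: "card {B'\<in>\<phi> ` P. L' B' = g j} = card {B\<in>P. L B = j}"
    if "j \<in> insert e D" for j
    unfolding fibre[OF that] by (intro card_image inj_on_subset[OF \<phi>(1)]) auto
  have "L' \<in> \<phi> ` P \<rightarrow>\<^sub>E insert (g e) (g ` D)"
    using PL(3) L' by (auto simp: L'_def map_labelled_partition_def PiE_iff)
  then have "(\<phi> ` P, L') \<in> labelled_partitions l A' (g e) (g ` D) r"
    using PL \<phi> card_fibre by (intro labelled_partitionsI) auto
  then show ?thesis
    by (simp add: L'_def map_labelled_partition_def)
qed

lemma inj_on_map_labelled_partition:
  assumes \<phi>: "inj_on \<phi> (Pow A)" and g: "inj_on g (insert e D)"
  shows "inj_on (map_labelled_partition \<phi> g) (labelled_partitions l A e D r)"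
proof (rule inj_onI, clarify)
  fix P L Q M
  assume PL: "(P, L) \<in> labelled_partitions l A e D r"
    and QM: "(Q, M) \<in> labelled_partitions l A e D r"
    and eq: "map_labelled_partition \<phi> g (P, L) = map_labelled_partition \<phi> g (Q, M)"
  have "P \<subseteq> Pow A" "Q \<subseteq> Pow A"
    using partition_onD1[OF labelled_partitionsD(1)[OF PL]]
      partition_onD1[OF labelled_partitionsD(1)[OF QM]] by auto
  moreover have "\<phi> ` P = \<phi> ` Q"
    using eq by (simp add: map_labelled_partition_def)
  ultimately have PQ: "P = Q" and inj: "inj_on \<phi> P"
    using inj_on_image_eq_iff[OF \<phi>] inj_on_subset[OF \<phi>] by auto
  have "L B = M B" if "B \<in> P" for B
  proof -
    have "g (L B) = snd (map_labelled_partition \<phi> g (P, L)) (\<phi> B)"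
      by (rule map_labelled_partition_label[OF inj that, symmetric])
    also have "\<dots> = g (M B)"
      using eq map_labelled_partition_label[OF inj that, of g M] by (simp add: PQ)
    finally have "g (L B) = g (M B)" .
    then show ?thesis
      using inj_onD[OF g] that PQ labelled_partitionsD(3)[OF PL] labelled_partitionsD(3)[OF QM]
      by blast
  qed
  then show "P = Q \<and> L = M"
    using PQ PiE_ext labelled_partitionsD(3)[OF PL] labelled_partitionsD(3)[OF QM] by metis
qed

lemma map_labelled_partition_comp:
  assumes "inj_on \<phi> P" "inj_on \<psi> (\<phi> ` P)"
  shows "map_labelled_partition \<psi> h (map_labelled_partition \<phi> g (P, L))
    = map_labelled_partition (\<psi> \<circ> \<phi>) (h \<circ> g) (P, L)"
proof -
  have "the_inv_into P (\<psi> \<circ> \<phi>) (\<psi> (\<phi> B)) = B" if "B \<in> P" for B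
    using the_inv_into_f_f[OF comp_inj_on[OF assms] that] by simp
  then show ?thesis
    using assms
    by (auto simp: map_labelled_partition_def image_comp the_inv_into_f_f intro!: restrict_ext)
qed

lemma map_labelled_partition_id:
  assumes "\<And>B. B \<in> P \<Longrightarrow> \<phi> B = B" "L \<in> P \<rightarrow>\<^sub>E S"
  shows "map_labelled_partition \<phi> id (P, L) = (P, L)"
proof -
  have "inj_on \<phi> P"
    using assms(1) by (metis inj_onI)
  then have "the_inv_into P \<phi> B = B" if "B \<in> P" for B
    using the_inv_into_f_f[of \<phi> P B] assms(1) that by simp
  then have "(\<lambda>B'\<in>P. L (the_inv_into P \<phi> B')) = L"
    using assms(2) by (auto simp: PiE_iff intro: trans[OF restrict_ext extensional_restrict])
  then show ?thesis
    using assms(1) by (simp add: map_labelled_partition_def)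
qed

lemma map_image_labelled_partition_mem:
  assumes PL: "(P, L) \<in> labelled_partitions l A e D r"
    and h: "inj_on h A" and g: "inj_on g (insert e D)"
  shows "map_labelled_partition ((`) h) g (P, L) \<in> labelled_partitions l (h ` A) (g e) (g ` D) r"
proof (rule map_labelled_partition_mem[OF PL _ _ _ g])
  note P = labelled_partitionsD(1,2)[OF PL]
  have PA: "P \<subseteq> Pow A"
    using partition_onD1[OF P(1)] by auto
  show "inj_on ((`) h) P"
    using inj_on_image_Pow[OF h] PA by (rule inj_on_subset)
  have "(`) h ` P - {{}} = (`) h ` P"
    using partition_onD3[OF P(1)] by auto
  then show "partition_on (h ` A) ((`) h ` P)"
    using partition_on_inj_image[OF P(1) h] by simp
  show "l \<le> card (h ` B)" if "B \<in> P" for B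
    using P(2)[OF that] card_image[OF inj_on_subset[OF h]] PA that by auto
qed

lemma card_labelled_partitions_le:
  fixes A :: "'a set" and A' :: "'c set" and D :: "'b set" and D' :: "'d set"
  assumes "finite A" "finite A'" "card A = card A'"
    and "finite D" "finite D'" "card D = card D'" "e \<notin> D" "e' \<notin> D'"
  shows "card (labelled_partitions l A e D r) \<le> card (labelled_partitions l A' e' D' r)"
proof -
  obtain h where h: "inj_on h A" "h ` A = A'"
    using finite_same_card_bij[OF assms(1-3)] by (auto simp: bij_betw_def)
  obtain g0 where g0: "bij_betw g0 D D'"
    using finite_same_card_bij assms(4-6) by blast
  define g where "g = g0(e := e')"
  have g: "inj_on g (insert e D)" "g ` D = D'" "g e = e'"
    using g0 assms(7,8) by (auto simp: g_def bij_betw_def inj_on_def fun_upd_image)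
  show ?thesis
  proof (rule card_inj_on_le)
    show "inj_on (map_labelled_partition ((`) h) g) (labelled_partitions l A e D r)"
      using inj_on_image_Pow[OF h(1)] g(1) by (rule inj_on_map_labelled_partition)
    show "map_labelled_partition ((`) h) g ` labelled_partitions l A e D r
      \<subseteq> labelled_partitions l A' e' D' r"
      using map_image_labelled_partition_mem[OF _ h(1) g(1)] h(2) g(2,3) by auto
    show "finite (labelled_partitions l A' e' D' r)"
      using assms(2,5) by (rule finite_labelled_partitions)
  qed
qed

lemma card_labelled_partitions_cong:
  fixes A :: "'a set" and A' :: "'c set" and D :: "'b set" and D' :: "'d set"
  assumes "finite A" "finite A'" "card A = card A'"
    and "finite D" "finite D'" "card D = card D'" "e \<notin> D" "e' \<notin> D'"
  shows "card (labelled_partitions l A e D r) = card (labelled_partitions l A' e' D' r)"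
  using card_labelled_partitions_le[OF assms] card_labelled_partitions_le[of A' A D' D e' e l r] assms
  by (simp add: le_antisym)

lemma S_ge_eq_card_labelled_partitions:
  assumes "finite A" "finite D" "e \<notin> D"
  shows "S_ge l (card A) (Suc (card D)) r = card (labelled_partitions l A e D r)"
proof -
  have "{1..Suc (card D)} = insert 1 {2..Suc (card D)}"
    by auto
  then have "S_ge l (card A) (Suc (card D)) r
    = card (labelled_partitions l {1..card A} (1::nat) {2..Suc (card D)} r)"
    by (simp add: S_ge_def labelled_partitions_def)
  also have "\<dots> = card (labelled_partitions l A e D r)"
    using assms by (intro card_labelled_partitions_cong) auto
  finally show ?thesis .
qed

definition block_of :: "'a set set \<Rightarrow> 'a \<Rightarrow> 'a set" where
  "block_of P a = (THE B. B \<in> P \<and> a \<in> B)"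

lemma block_of_eq:
  assumes "partition_on A P" "B \<in> P" "a \<in> B"
  shows "block_of P a = B"
  unfolding block_of_def
proof (rule the_equality)
  show "B' = B" if "B' \<in> P \<and> a \<in> B'" for B'
    using partition_onD2[OF assms(1)] assms(2,3) that by (auto simp: disjoint_def)
qed (use assms in auto)

lemma block_of_in:
  assumes "partition_on A P" "a \<in> A"
  shows "block_of P a \<in> P" "a \<in> block_of P a"
proof -
  obtain B where "B \<in> P" "a \<in> B"
    using partition_onD1[OF assms(1)] assms(2) by auto
  then show "block_of P a \<in> P" "a \<in> block_of P a"
    using block_of_eq[OF assms(1)] by auto
qed

lemma block_of_insert:
  assumes "a \<in> K" "a \<notin> \<Union>P"
  shows "block_of (insert K P) a = K"
  unfolding block_of_def by (rule the_equality) (use assms in auto)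

section \<open>Partitions in which the block of a point has more than \<open>l\<close> elements\<close>

lemma partition_on_insert_into_block:
  assumes "partition_on (A - {a}) P" "B \<in> P" "a \<in> A"
  shows "partition_on A ((\<lambda>C. if C = B then insert a C else C) ` P)"
proof (rule partition_onI)
  note P = partition_onD1[OF assms(1)] partition_onD2[OF assms(1)] partition_onD3[OF assms(1)]
  show "\<Union>((\<lambda>C. if C = B then insert a C else C) ` P) = A"
    using P(1) assms(2,3) by (auto split: if_splits)
  show "{} \<notin> (\<lambda>C. if C = B then insert a C else C) ` P"
    using P(3) by auto
  show "disjnt C1 C2"
    if "C1 \<in> (\<lambda>C. if C = B then insert a C else C) ` P"
      "C2 \<in> (\<lambda>C. if C = B then insert a C else C) ` P" "C1 \<noteq> C2" for C1 C2
    using that P(1,2) by (auto simp: disjoint_def disjnt_def split: if_splits)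
qed

lemma partition_on_remove_point:
  assumes "partition_on A P" "{a} \<notin> P"
  shows "partition_on (A - {a}) ((\<lambda>C. C - {a}) ` P)"
proof (rule partition_onI)
  note P = partition_onD1[OF assms(1)] partition_onD2[OF assms(1)] partition_onD3[OF assms(1)]
  show "\<Union>((\<lambda>C. C - {a}) ` P) = A - {a}"
    using P(1) by auto
  show "{} \<notin> (\<lambda>C. C - {a}) ` P"
    using P(3) assms(2) by (auto simp: Diff_eq_empty_iff subset_singleton_iff)
  show "disjnt C1 C2" if "C1 \<in> (\<lambda>C. C - {a}) ` P" "C2 \<in> (\<lambda>C. C - {a}) ` P" "C1 \<noteq> C2"
    for C1 C2
    using that P(2) by (auto simp: disjoint_def disjnt_def)
qed

lemma inj_on_remove_point:
  assumes "partition_on A P"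
  shows "inj_on (\<lambda>C. C - {a}) P"
proof (rule inj_onI)
  fix C1 C2
  assume C: "C1 \<in> P" "C2 \<in> P" "C1 - {a} = C2 - {a}"
  show "C1 = C2"
  proof (rule ccontr)
    assume "C1 \<noteq> C2"
    then have "C1 \<inter> C2 = {}"
      using partition_onD2[OF assms] C(1,2) by (auto simp: disjoint_def)
    then have "C1 \<subseteq> {a}" "C2 \<subseteq> {a}"
      using C(3) by auto
    then show False
      using partition_onD3[OF assms] C(1,2) \<open>C1 \<noteq> C2\<close> by (auto simp: subset_singleton_iff)
  qed
qed

lemma inj_on_insert_into_block:
  assumes "a \<notin> \<Union>P"
  shows "inj_on (\<lambda>C. if C = B then insert a C else C) P"
  using assms by (auto intro!: inj_onI split: if_splits)

definition insert_into_block ::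
    "'a \<Rightarrow> ('a set set \<times> ('a set \<Rightarrow> 'b)) \<times> 'a set \<Rightarrow> 'a set set \<times> ('a set \<Rightarrow> 'b)" where
  "insert_into_block a = (\<lambda>(s, B). map_labelled_partition (\<lambda>C. if C = B then insert a C else C) id s)"

definition remove_point ::
    "'a \<Rightarrow> 'a set set \<times> ('a set \<Rightarrow> 'b) \<Rightarrow> ('a set set \<times> ('a set \<Rightarrow> 'b)) \<times> 'a set" where
  "remove_point a = (\<lambda>s. (map_labelled_partition (\<lambda>C. C - {a}) id s, block_of (fst s) a - {a}))"

lemma insert_into_block_mem:
  assumes PL: "(P, L) \<in> labelled_partitions l (A - {a}) e D r"
    and "B \<in> P" "a \<in> A" "finite A"
  shows "insert_into_block a ((P, L), B) \<in> labelled_partitions l A e D r"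
    "l < card (block_of (fst (insert_into_block a ((P, L), B))) a)"
proof -
  let ?grow = "\<lambda>C. if C = B then insert a C else C"
  note P = labelled_partitionsD(1,2)[OF PL]
  have "a \<notin> \<Union>P" and fin: "\<And>C. C \<in> P \<Longrightarrow> finite C"
    using partition_onD1[OF P(1)] \<open>finite A\<close> by (auto intro: finite_subset)
  have inj: "inj_on ?grow P"
    using \<open>a \<notin> \<Union>P\<close> by (rule inj_on_insert_into_block)
  have part: "partition_on A (?grow ` P)"
    using P(1) assms(2,3) by (rule partition_on_insert_into_block)
  have "l \<le> card (?grow C)" if "C \<in> P" for C
    using P(2)[OF that] fin[OF that] card_insert_le[of C a] by auto
  then show "insert_into_block a ((P, L), B) \<in> labelled_partitions l A e D r"
    using map_labelled_partition_mem[OF PL inj part, of id] by (simp add: insert_into_block_def)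
  have "block_of (?grow ` P) a = insert a B"
    using block_of_eq[OF part] assms(2) by auto
  moreover have "l < card (insert a B)"
    using P(2)[OF assms(2)] fin[OF assms(2)] \<open>a \<notin> \<Union>P\<close> assms(2) by auto
  ultimately show "l < card (block_of (fst (insert_into_block a ((P, L), B))) a)"
    by (simp add: insert_into_block_def)
qed

lemma remove_point_mem:
  assumes PL: "(P, L) \<in> labelled_partitions l A e D r"
    and "a \<in> A" "l < card (block_of P a)" "1 \<le> l"
  shows "remove_point a (P, L) \<in> Sigma (labelled_partitions l (A - {a}) e D r) fst"
proof -
  note P = labelled_partitionsD(1,2)[OF PL]
  have "{a} \<notin> P"
    using block_of_eq[OF P(1), of "{a}" a] assms(3,4) by auto
  with P(1) have part: "partition_on (A - {a}) ((\<lambda>C. C - {a}) ` P)"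
    by (rule partition_on_remove_point)
  have "l \<le> card (C - {a})" if "C \<in> P" for C
  proof (cases "C = block_of P a")
    case True
    then show ?thesis
      using assms(3) block_of_in[OF P(1) assms(2)] card_Diff_singleton[of a C]
      by (auto intro: card_ge_0_finite)
  next
    case False
    then have "a \<notin> C"
      using block_of_eq[OF P(1) that] by auto
    then show ?thesis
      using P(2)[OF that] by simp
  qed
  then show ?thesis
    using map_labelled_partition_mem[OF PL inj_on_remove_point[OF P(1)] part, of id]
      block_of_in(1)[OF P(1) assms(2)]
    by (simp add: remove_point_def)
qed

lemma remove_point_insert_into_block:
  assumes PL: "(P, L) \<in> labelled_partitions l (A - {a}) e D r" and "B \<in> P" "a \<in> A"
  shows "remove_point a (insert_into_block a ((P, L), B)) = ((P, L), B)"
proof -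
  let ?grow = "\<lambda>C. if C = B then insert a C else C"
  note P = labelled_partitionsD(1,3)[OF PL]
  have a: "a \<notin> \<Union>P"
    using partition_onD1[OF P(1)] by auto
  have part: "partition_on A (?grow ` P)"
    using P(1) assms(2,3) by (rule partition_on_insert_into_block)
  have "map_labelled_partition (\<lambda>C. C - {a}) id (map_labelled_partition ?grow id (P, L))
    = map_labelled_partition ((\<lambda>C. C - {a}) \<circ> ?grow) id (P, L)"
    using map_labelled_partition_comp[OF inj_on_insert_into_block[OF a] inj_on_remove_point[OF part],
        where g = id and h = id]
    by simp
  also have "\<dots> = (P, L)"
    using a P(2) by (intro map_labelled_partition_id) auto
  moreover have "block_of (?grow ` P) a = insert a B"
    using block_of_eq[OF part, of "insert a B" a] assms(2) by auto
  ultimately show ?thesis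
    using a assms(2) by (auto simp: insert_into_block_def remove_point_def)
qed

lemma insert_into_block_remove_point:
  assumes PL: "(P, L) \<in> labelled_partitions l A e D r" and "a \<in> A"
  shows "insert_into_block a (remove_point a (P, L)) = (P, L)"
proof -
  let ?grow = "\<lambda>C. if C = block_of P a - {a} then insert a C else C"
  note P = labelled_partitionsD(1,3)[OF PL]
  note B = block_of_in[OF P(1) \<open>a \<in> A\<close>]
  have inj: "inj_on (\<lambda>C. C - {a}) P"
    using P(1) by (rule inj_on_remove_point)
  have grow_remove: "?grow (C - {a}) = C" if C: "C \<in> P" for C
  proof (cases "C = block_of P a")
    case True
    then show ?thesis
      using B by auto
  next
    case False
    then have "C - {a} \<noteq> block_of P a - {a}" "a \<notin> C"
      using inj_onD[OF inj _ C B(1)] block_of_eq[OF P(1) C] by auto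
    then show ?thesis
      by simp
  qed
  have "inj_on ?grow ((\<lambda>C. C - {a}) ` P)"
    by (rule inj_on_insert_into_block) auto
  then have "map_labelled_partition ?grow id (map_labelled_partition (\<lambda>C. C - {a}) id (P, L))
    = map_labelled_partition (?grow \<circ> (\<lambda>C. C - {a})) id (P, L)"
    using map_labelled_partition_comp[OF inj, where g = id and h = id] by simp
  also have "\<dots> = (P, L)"
    using grow_remove by (intro map_labelled_partition_id[OF _ P(2)]) simp
  finally have "map_labelled_partition ?grow id (map_labelled_partition (\<lambda>C. C - {a}) id (P, L))
    = (P, L)" .
  then show ?thesis
    by (simp add: insert_into_block_def remove_point_def)
qed

lemma bij_betw_insert_into_block:
  assumes "finite A" "a \<in> A" "1 \<le> l"
  shows "bij_betw (insert_into_block a) (Sigma (labelled_partitions l (A - {a}) e D r) fst)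
    {s \<in> labelled_partitions l A e D r. l < card (block_of (fst s) a)}"
proof (rule bij_betw_byWitness[where f' = "remove_point a"])
  show "\<forall>x\<in>Sigma (labelled_partitions l (A - {a}) e D r) fst.
      remove_point a (insert_into_block a x) = x"
    using remove_point_insert_into_block[OF _ _ \<open>a \<in> A\<close>] by auto
  show "\<forall>s\<in>{s \<in> labelled_partitions l A e D r. l < card (block_of (fst s) a)}.
      insert_into_block a (remove_point a s) = s"
    using insert_into_block_remove_point[OF _ \<open>a \<in> A\<close>] by auto
  show "insert_into_block a ` Sigma (labelled_partitions l (A - {a}) e D r) fst
      \<subseteq> {s \<in> labelled_partitions l A e D r. l < card (block_of (fst s) a)}"
    using insert_into_block_mem[OF _ _ \<open>a \<in> A\<close> \<open>finite A\<close>] by auto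
  show "remove_point a ` {s \<in> labelled_partitions l A e D r. l < card (block_of (fst s) a)}
      \<subseteq> Sigma (labelled_partitions l (A - {a}) e D r) fst"
  proof (rule image_subsetI)
    fix s
    assume "s \<in> {s \<in> labelled_partitions l A e D r. l < card (block_of (fst s) a)}"
    then show "remove_point a s \<in> Sigma (labelled_partitions l (A - {a}) e D r) fst"
      using remove_point_mem[of "fst s" "snd s" l A e D r a] assms(2,3) by simp
  qed
qed

lemma card_labelled_partitions_large_block:
  assumes "finite A" "a \<in> A" "finite D" "e \<notin> D" "1 \<le> l"
  shows "card {s \<in> labelled_partitions l A e D r. l < card (block_of (fst s) a)}
    = (card D + r) * card (labelled_partitions l (A - {a}) e D r)"
proof -
  let ?X = "labelled_partitions l (A - {a}) e D r"
  have "card {s \<in> labelled_partitions l A e D r. l < card (block_of (fst s) a)} = card (Sigma ?X fst)"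
    using bij_betw_insert_into_block[OF assms(1,2,5), where e = e and D = D and r = r] by (simp add: bij_betw_same_card)
  also have "\<dots> = (\<Sum>s\<in>?X. card (fst s))"
  proof (rule card_SigmaI)
    show "finite ?X"
      using assms(1,3) by (simp add: finite_labelled_partitions)
    show "\<forall>s\<in>?X. finite (fst s)"
      using finite_elements[OF finite_Diff[OF assms(1)] labelled_partitionsD(1)] by force
  qed
  also have "\<dots> = (\<Sum>s\<in>?X. card D + r)"
    using card_blocks_labelled_partition[OF _ finite_Diff[OF assms(1)] assms(3,4)]
    by (intro sum.cong) force+
  finally show ?thesis
    by simp
qed

section \<open>Partitions in which the block of a point has exactly \<open>l\<close> elements\<close>

lemma insert_block_mem:
  assumes PL: "(P, L) \<in> labelled_partitions l (A - K) e (D - {j}) (if j = e then r - 1 else r)"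
    and K: "K \<subseteq> A" "K \<noteq> {}" "l \<le> card K"
    and "j \<in> insert e D" "e \<notin> D" "1 \<le> r" "finite A"
  shows "(insert K P, L(K := j)) \<in> labelled_partitions l A e D r"
proof -
  note PL = labelled_partitionsD[OF PL]
  have disj: "disjnt K (\<Union>P)"
    using partition_onD1[OF PL(1)] by (auto simp: disjnt_def)
  then have part: "partition_on A (insert K P)"
    using PL(1) K(1,2) by (simp add: partition_on_insert)
  have "K \<notin> P"
    using disj K(2) by (auto simp: disjnt_def)
  have fibre: "{B\<in>insert K P. (L(K := j)) B = x}
    = (if x = j then insert K {B\<in>P. L B = x} else {B\<in>P. L B = x})" for x
    using \<open>K \<notin> P\<close> by auto
  have no_j: "{B\<in>P. L B = j} = {}" if "j \<in> D"
    using PL(3) that \<open>e \<notin> D\<close> by fastforce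
  have "finite P"
    using finite_elements[OF finite_Diff[OF \<open>finite A\<close>] PL(1)] .
  have "L(K := j) \<in> insert K P \<rightarrow>\<^sub>E insert e D"
    using PL(3) \<open>j \<in> insert e D\<close> by (intro PiE_fun_upd) (auto simp: PiE_iff)
  moreover have "card {B\<in>insert K P. (L(K := j)) B = x} = 1" if "x \<in> D" for x
    using PL(4)[of x] that unfolding fibre by (cases "x = j") (simp_all add: no_j)
  moreover have "card {B\<in>insert K P. (L(K := j)) B = e} = r"
    using PL(5) \<open>1 \<le> r\<close> \<open>finite P\<close> \<open>K \<notin> P\<close> unfolding fibre by auto
  ultimately show ?thesis
    using part PL(2) K(3) by (intro labelled_partitionsI) auto
qed

lemma delete_block_mem:
  assumes PL: "(P, L) \<in> labelled_partitions l A e D r" and "B \<in> P" "finite A"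
  shows "(P - {B}, L(B := undefined))
    \<in> labelled_partitions l (A - B) e (D - {L B}) (if L B = e then r - 1 else r)"
proof -
  note PL = labelled_partitionsD[OF PL]
  have part: "partition_on (A - B) (P - {B})"
    using partition_on_insert[of B "P - {B}" A] PL(1) partition_onD2[OF PL(1)] \<open>B \<in> P\<close>
    by (auto simp: disjnt_def disjoint_def insert_absorb)
  have labels: "L C \<in> insert e (D - {L B})" if C: "C \<in> P - {B}" for C
  proof (cases "L B \<in> D")
    case True
    obtain X where "{C\<in>P. L C = L B} = {X}"
      using PL(4)[OF True] by (rule card_1_singletonE)
    then have "L C \<noteq> L B"
      using C \<open>B \<in> P\<close> by (metis (mono_tags, lifting) DiffE mem_Collect_eq singletonD singletonI)
    then show ?thesis
      using C PiE_mem[OF PL(3)] by simp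
  next
    case False
    then show ?thesis
      using C \<open>B \<in> P\<close> PiE_mem[OF PL(3)] by auto
  qed
  have "L(B := undefined) = restrict L (P - {B})"
    using PL(3) by (auto simp: PiE_iff extensional_def)
  then have "L(B := undefined) \<in> P - {B} \<rightarrow>\<^sub>E insert e (D - {L B})"
    using labels by (simp add: restrict_PiE_iff)
  moreover have "{C\<in>P - {B}. (L(B := undefined)) C = x} = {C\<in>P. L C = x} - {B}" for x
    by auto
  moreover have "finite P"
    using finite_elements[OF \<open>finite A\<close> PL(1)] .
  ultimately show ?thesis
    using part PL(2,4,5) \<open>B \<in> P\<close> by (intro labelled_partitionsI) auto
qed

definition add_block ::
    "'a \<Rightarrow> ('a set \<times> 'b) \<times> 'a set set \<times> ('a set \<Rightarrow> 'b) \<Rightarrow> 'a set set \<times> ('a set \<Rightarrow> 'b)" where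
  "add_block a = (\<lambda>((C, j), (P, L)). (insert (insert a C) P, L(insert a C := j)))"

definition remove_block ::
    "'a \<Rightarrow> 'a set set \<times> ('a set \<Rightarrow> 'b) \<Rightarrow> ('a set \<times> 'b) \<times> 'a set set \<times> ('a set \<Rightarrow> 'b)" where
  "remove_block a = (\<lambda>(P, L). ((block_of P a - {a}, L (block_of P a)),
     (P - {block_of P a}, L(block_of P a := undefined))))"

lemma add_block_mem:
  assumes PL: "(P, L) \<in> labelled_partitions l (A - insert a C) e (D - {j}) (if j = e then r - 1 else r)"
    and C: "C \<subseteq> A - {a}" "card C = l - 1"
    and "j \<in> insert e D" "finite A" "a \<in> A" "e \<notin> D" "1 \<le> l" "1 \<le> r"
  shows "add_block a ((C, j), (P, L)) \<in> labelled_partitions l A e D r"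
    "card (block_of (fst (add_block a ((C, j), (P, L)))) a) = l"
proof -
  have "finite C" "a \<notin> C"
    using C(1) \<open>finite A\<close> finite_subset by auto
  then have K: "insert a C \<subseteq> A" "card (insert a C) = l"
    using C \<open>a \<in> A\<close> \<open>1 \<le> l\<close> by auto
  show "add_block a ((C, j), (P, L)) \<in> labelled_partitions l A e D r"
    using insert_block_mem[OF PL K(1) _ _ \<open>j \<in> insert e D\<close>] K(2) assms(5,7,9)
    by (simp add: add_block_def)
  have "a \<notin> \<Union>P"
    using partition_onD1[OF labelled_partitionsD(1)[OF PL]] by auto
  then show "card (block_of (fst (add_block a ((C, j), (P, L)))) a) = l"
    using block_of_insert[of a "insert a C" P] K(2) by (simp add: add_block_def)
qed

lemma remove_block_mem:
  assumes PL: "(P, L) \<in> labelled_partitions l A e D r"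
    and "card (block_of P a) = l" "finite A" "a \<in> A"
  shows "remove_block a (P, L) \<in> (SIGMA (C, j):{C. C \<subseteq> A - {a} \<and> card C = l - 1} \<times> insert e D.
    labelled_partitions l (A - insert a C) e (D - {j}) (if j = e then r - 1 else r))"
proof -
  note B = block_of_in[OF labelled_partitionsD(1)[OF PL] \<open>a \<in> A\<close>]
  have "A - insert a (block_of P a - {a}) = A - block_of P a"
    using B by auto
  moreover have "block_of P a - {a} \<subseteq> A - {a}" "card (block_of P a - {a}) = l - 1"
    using B \<open>card (block_of P a) = l\<close> partition_onD1[OF labelled_partitionsD(1)[OF PL]] by auto
  moreover have "L (block_of P a) \<in> insert e D"
    using PiE_mem[OF labelled_partitionsD(3)[OF PL] B(1)] .
  ultimately show ?thesis
    using delete_block_mem[OF PL B(1) \<open>finite A\<close>] by (simp add: remove_block_def)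
qed

lemma remove_block_add_block:
  assumes PL: "(P, L) \<in> labelled_partitions l (A - insert a C) e D r" and "a \<notin> C"
  shows "remove_block a (add_block a ((C, j), (P, L))) = ((C, j), (P, L))"
proof -
  have "a \<notin> \<Union>P"
    using partition_onD1[OF labelled_partitionsD(1)[OF PL]] by auto
  then have "insert a C \<notin> P" "block_of (insert (insert a C) P) a = insert a C"
    using block_of_insert[of a "insert a C" P] by auto
  then show ?thesis
    using PiE_arb[OF labelled_partitionsD(3)[OF PL]] \<open>a \<notin> C\<close>
    by (auto simp: add_block_def remove_block_def)
qed

lemma add_block_remove_block:
  assumes PL: "(P, L) \<in> labelled_partitions l A e D r" and "a \<in> A"
  shows "add_block a (remove_block a (P, L)) = (P, L)"
  using block_of_in[OF labelled_partitionsD(1)[OF PL] \<open>a \<in> A\<close>]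
  by (auto simp: add_block_def remove_block_def insert_absorb)

lemma bij_betw_add_block:
  assumes "finite A" "a \<in> A" "e \<notin> D" "1 \<le> l" "1 \<le> r"
  shows "bij_betw (add_block a)
    (SIGMA (C, j):{C. C \<subseteq> A - {a} \<and> card C = l - 1} \<times> insert e D.
      labelled_partitions l (A - insert a C) e (D - {j}) (if j = e then r - 1 else r))
    {s \<in> labelled_partitions l A e D r. card (block_of (fst s) a) = l}"
proof (rule bij_betw_byWitness[where f' = "remove_block a"])
  show "\<forall>x\<in>SIGMA (C, j):{C. C \<subseteq> A - {a} \<and> card C = l - 1} \<times> insert e D.
      labelled_partitions l (A - insert a C) e (D - {j}) (if j = e then r - 1 else r).
      remove_block a (add_block a x) = x"
    using remove_block_add_block by fastforce
  show "\<forall>s\<in>{s \<in> labelled_partitions l A e D r. card (block_of (fst s) a) = l}.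
      add_block a (remove_block a s) = s"
    using add_block_remove_block[OF _ \<open>a \<in> A\<close>] by auto
  show "add_block a ` (SIGMA (C, j):{C. C \<subseteq> A - {a} \<and> card C = l - 1} \<times> insert e D.
      labelled_partitions l (A - insert a C) e (D - {j}) (if j = e then r - 1 else r))
    \<subseteq> {s \<in> labelled_partitions l A e D r. card (block_of (fst s) a) = l}"
    using add_block_mem[OF _ _ _ _ assms] by auto
  show "remove_block a ` {s \<in> labelled_partitions l A e D r. card (block_of (fst s) a) = l}
    \<subseteq> (SIGMA (C, j):{C. C \<subseteq> A - {a} \<and> card C = l - 1} \<times> insert e D.
      labelled_partitions l (A - insert a C) e (D - {j}) (if j = e then r - 1 else r))"
  proof (rule image_subsetI)
    fix s
    assume "s \<in> {s \<in> labelled_partitions l A e D r. card (block_of (fst s) a) = l}"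
    then show "remove_block a s \<in> (SIGMA (C, j):{C. C \<subseteq> A - {a} \<and> card C = l - 1} \<times> insert e D.
      labelled_partitions l (A - insert a C) e (D - {j}) (if j = e then r - 1 else r))"
      using remove_block_mem[of "fst s" "snd s" l A e D r a] assms(1,2) by simp
  qed
qed

lemma card_labelled_partitions_small_block:
  assumes "finite A" "a \<in> A" "finite D" "e \<notin> D" "1 \<le> l" "1 \<le> r"
  shows "card {s \<in> labelled_partitions l A e D r. card (block_of (fst s) a) = l}
    = (\<Sum>(C, j)\<in>{C. C \<subseteq> A - {a} \<and> card C = l - 1} \<times> insert e D.
         card (labelled_partitions l (A - insert a C) e (D - {j}) (if j = e then r - 1 else r)))"
proof -
  let ?I = "{C. C \<subseteq> A - {a} \<and> card C = l - 1} \<times> insert e D"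
  let ?X = "\<lambda>(C, j). labelled_partitions l (A - insert a C) e (D - {j}) (if j = e then r - 1 else r)"
  have "card {s \<in> labelled_partitions l A e D r. card (block_of (fst s) a) = l} = card (Sigma ?I ?X)"
    using bij_betw_add_block[OF assms(1,2,4-6)] by (simp add: bij_betw_same_card)
  also have "\<dots> = (\<Sum>x\<in>?I. card (?X x))"
  proof (rule card_SigmaI)
    have "{C. C \<subseteq> A - {a} \<and> card C = l - 1} \<subseteq> Pow A"
      by auto
    then show "finite ?I"
      using assms(1,3) finite_subset by blast
    show "\<forall>x\<in>?I. finite (?X x)"
      using assms(1,3) by (auto intro: finite_labelled_partitions)
  qed
  finally show ?thesis
    by (simp add: split_def)
qed

section \<open>The recurrence\<close>

lemma card_labelled_partitions_recurrence:
  assumes "finite A" "a \<in> A" "finite D" "e \<notin> D" "1 \<le> l" "1 \<le> r"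
  shows "card (labelled_partitions l A e D r)
    = (card D + r) * card (labelled_partitions l (A - {a}) e D r)
      + (\<Sum>(C, j)\<in>{C. C \<subseteq> A - {a} \<and> card C = l - 1} \<times> insert e D.
           card (labelled_partitions l (A - insert a C) e (D - {j}) (if j = e then r - 1 else r)))"
proof -
  let ?X = "labelled_partitions l A e D r"
  let ?large = "{s \<in> ?X. l < card (block_of (fst s) a)}"
  let ?exact = "{s \<in> ?X. card (block_of (fst s) a) = l}"
  have "l \<le> card (block_of P a)" if "(P, L) \<in> ?X" for P L
    using labelled_partitionsD(2)[OF that block_of_in(1)[OF labelled_partitionsD(1)[OF that] \<open>a \<in> A\<close>]] .
  then have "?large \<union> ?exact = ?X"
    by (fastforce simp: le_less)
  moreover have "card (?large \<union> ?exact) = card ?large + card ?exact"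
    using finite_labelled_partitions[OF assms(1,3)] by (intro card_Un_disjoint) auto
  ultimately show ?thesis
    using card_labelled_partitions_large_block[OF assms(1-5)]
      card_labelled_partitions_small_block[OF assms] by simp
qed

lemma sum_card_remainders:
  assumes "finite A" "a \<in> A" "finite D" "e \<notin> D" "1 \<le> l"
  shows "(\<Sum>(C, j)\<in>{C. C \<subseteq> A - {a} \<and> card C = l - 1} \<times> insert e D.
      card (labelled_partitions l (A - insert a C) e (D - {j}) (if j = e then r - 1 else r)))
    = ((card A - 1) choose (l - 1))
      * (card D * S_ge l (card A - l) (card D) r + S_ge l (card A - l) (Suc (card D)) (r - 1))"
proof -
  let ?Cs = "{C. C \<subseteq> A - {a} \<and> card C = l - 1}"
  let ?lost_repeated = "S_ge l (card A - l) (Suc (card D)) (r - 1)"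
  let ?lost_distinct = "S_ge l (card A - l) (card D) r"
  have "card (labelled_partitions l (A - insert a C) e (D - {j}) (if j = e then r - 1 else r))
      = (if j = e then ?lost_repeated else ?lost_distinct)"
    if C: "C \<in> ?Cs" and j: "j \<in> insert e D" for C j
  proof -
    have "finite C" "a \<notin> C"
      using C assms(1) finite_subset by auto
    then have "card (A - insert a C) = card A - l"
      using C assms(1,2,5) by (subst card_Diff_subset) (auto intro: finite_subset)
    moreover have "Suc (card (D - {j})) = card D" if "j \<in> D"
      using that assms(3) card_gt_0_iff[of D] by (auto simp: Suc_diff_1)
    ultimately show ?thesis
      using S_ge_eq_card_labelled_partitions[of "A - insert a C" "D - {j}" e l] j assms(1,3,4)
      by (auto simp: insert_absorb)
  qed
  then have "(\<Sum>(C, j)\<in>?Cs \<times> insert e D.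
      card (labelled_partitions l (A - insert a C) e (D - {j}) (if j = e then r - 1 else r)))
    = (\<Sum>(C, j)\<in>?Cs \<times> insert e D. if j = e then ?lost_repeated else ?lost_distinct)"
    by (intro sum.cong) auto
  also have "\<dots> = card ?Cs * (card D * ?lost_distinct + ?lost_repeated)"
  proof -
    have "(\<Sum>j\<in>D. if j = e then ?lost_repeated else ?lost_distinct) = (\<Sum>j\<in>D. ?lost_distinct)"
      using assms(4) by (intro sum.cong) auto
    then show ?thesis
      using assms(3,4) by (simp add: sum.cartesian_product[symmetric])
  qed
  also have "card ?Cs = (card A - 1) choose (l - 1)"
    using n_subsets[of "A - {a}" "l - 1"] assms(1,2) by simp
  finally show ?thesis .
qed

lemma S_ge_Suc_recurrence:
  assumes "1 \<le> m" "1 \<le> l" "1 \<le> r"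
  shows "S_ge l m (Suc d) r = (d + r) * S_ge l (m - 1) (Suc d) r
    + ((m - 1) choose (l - 1)) * (d * S_ge l (m - l) d r + S_ge l (m - l) (Suc d) (r - 1))"
proof -
  have "{1..m} - {m} = {1..m - 1}"
    by auto
  then show ?thesis
    using card_labelled_partitions_recurrence[of "{1..m}" m "{1..d}" 0 l r]
      sum_card_remainders[of "{1..m}" m "{1..d}" 0 l r]
      S_ge_eq_card_labelled_partitions[of "{1..m}" "{1..d}" 0 l r]
      S_ge_eq_card_labelled_partitions[of "{1..m - 1}" "{1..d}" 0 l r] assms
    by simp
qed

theorem mainTheorem9:
  fixes n k r l :: nat
  assumes "n \<ge> 1" and "k \<ge> 1" and "r \<ge> 1" and "l \<ge> 1"
  shows "S_ge l n k r =
           (k + r - 1) * S_ge l (n - 1) k r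
           + ((n - 1) choose (l - 1)) *
               ((k - 1) * S_ge l (n - l) (k - 1) r + S_ge l (n - l) k (r - 1))"
proof -
  obtain d where "k = Suc d"
    using assms(2) by (cases k) auto
  then show ?thesis
    using S_ge_Suc_recurrence[OF assms(1,4,3), of d] by simp
qed

end
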